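(* Let $l,d,t>0$ and $R_{t,d,l}(z)=t+(2l+2d-t)z+(2l-2d-t)z^2+tz^3$. (1) $R_{t,d,l}$ has two (non-real) complex conjugate roots if and only if $l\,q_1(t,l)<d<l\,q_2(t,l)$. (2) If $z_0$ denotes a non-real root of $R_{t,d,l}$ in the upper half plane (when it exists), then $|z_0|>1$. (3) If $d\ge l\,q_2(t,l)$ and $z_{\max}$ denotes the largest real root of $R_{t,d,l}$, then $z_{\max}>1$. (4) If $d\le l\,q_1(t,l)$ and $z_{\min}$ denotes the smallest real root of $R_{t,d,l}$, then $z_{\min}<-1$.
   Context: $q_2(t,l)=\sqrt{-\frac{t^2}{2l^2}+\frac{5t}{l}+1+\frac12\frac{t^2}{l^2}\bigl(1+\frac{4l}{t}\bigr)^{3/2}}$, and $q_1(t,l)=\sqrt{-\frac{t^2}{2l^2}+\frac{5t}{l}+1-\frac12\frac{t^2}{l^2}\bigl(1+\frac{4l}{t}\bigr)^{3/2}}$ if $0\le t/l<\frac12$, while $q_1(t,l)=0$ if $t/l\ge\frac12$. *)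

theory Defs
  imports Complex_Main
begin

definition q2 :: "real \<Rightarrow> real \<Rightarrow> real" where
  "q2 t l = sqrt (- (t^2 / (2 * l^2)) + 5 * t / l + 1
                  + (1/2) * (t^2 / l^2) * (1 + 4 * l / t) powr (3/2))"

definition q1 :: "real \<Rightarrow> real \<Rightarrow> real" where
  "q1 t l = (if 0 \<le> t / l \<and> t / l < 1/2
             then sqrt (- (t^2 / (2 * l^2)) + 5 * t / l + 1
                        - (1/2) * (t^2 / l^2) * (1 + 4 * l / t) powr (3/2))
             else 0)"

definition Rtdl :: "real \<Rightarrow> real \<Rightarrow> real \<Rightarrow> 'a::real_algebra_1 \<Rightarrow> 'a" where
  "Rtdl t d l z = of_real t + of_real (2*l + 2*d - t) * z
                  + of_real (2*l - 2*d - t) * z^2 + of_real t * z^3"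

end

theory Submission
  imports Defs "HOL-Library.Quadratic_Discriminant"
begin

text \<open>Scaling reduces to \<open>l = 1\<close>. Since \<open>R(-1) = -4d < 0 < t = R(0)\<close>, the cubic has a real root
  \<open>r \<in> (-1, 0)\<close>, and dividing it out leaves a quadratic \<open>t z\<^sup>2 + p z + q\<close> with \<open>q = -t/r > t\<close>.
  Its two roots therefore have product \<open>q/t > 1\<close>: a non-real pair has modulus \<open>> 1\<close>, and a real
  pair has one root beyond \<open>\<plusminus>1\<close> on the side given by the sign of \<open>-p\<close>, which the bounds on \<open>d\<close>
  determine. The cubic discriminant is the quadratic one times the square of the quadratic at \<open>r\<close>,
  so non-real roots exist iff it is negative; as a polynomial in \<open>d\<^sup>2\<close> its zeros are
  \<open>(l q\<^sub>1)\<^sup>2\<close> and \<open>(l q\<^sub>2)\<^sup>2\<close>.\<close>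

section \<open>Real quadratics and cubics\<close>

lemma one_lt_factor_if_prod_gt_one:
  fixes x y :: real
  assumes "1 < x * y" and "0 < x + y"
  shows "1 < x \<or> 1 < y"
proof (rule ccontr)
  assume "\<not> (1 < x \<or> 1 < y)"
  moreover have "0 < x" "0 < y"
    using assms by (smt (verit) mult_nonpos_nonneg mult_nonneg_nonpos)+
  ultimately have "x * y \<le> 1 * 1"
    by (intro mult_mono) auto
  with assms show False by simp
qed

lemma power2_diff_less_power2_iff:
  fixes x c w :: real
  assumes "0 \<le> w"
  shows "(x - c)^2 < w^2 \<longleftrightarrow> c - w < x \<and> x < c + w"
proof -
  have "(x - c)^2 < w^2 \<longleftrightarrow> \<bar>x - c\<bar> < w"
    using real_sqrt_less_iff[of "(x - c)^2" "w^2"] assms by simp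
  then show ?thesis
    by linarith
qed

lemma quadratic_nonreal_root_iff:
  fixes a p q :: real and z :: complex
  assumes "a \<noteq> 0" and "Im z \<noteq> 0"
  shows "of_real a * z^2 + of_real p * z + of_real q = 0 \<longleftrightarrow>
         p = -2 * a * Re z \<and> q = a * (cmod z)^2"
proof -
  have "of_real a * z^2 + of_real p * z + of_real q = 0 \<longleftrightarrow>
        a * ((Re z)^2 - (Im z)^2) + p * Re z + q = 0 \<and> Im z * (2 * a * Re z + p) = 0"
    by (simp add: complex_eq_iff power2_eq_square algebra_simps)
  also have "\<dots> \<longleftrightarrow> p = -2 * a * Re z \<and> a * ((Re z)^2 - (Im z)^2) + p * Re z + q = 0"
    using assms(2) by auto
  also have "\<dots> \<longleftrightarrow> p = -2 * a * Re z \<and> q = a * ((Re z)^2 + (Im z)^2)"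
    by (auto simp: algebra_simps power2_eq_square)
  finally show ?thesis
    by (simp only: cmod_power2)
qed

lemma ex_nonreal_quadratic_root_iff:
  fixes a p q :: real
  assumes "a \<noteq> 0"
  shows "(\<exists>z::complex. Im z \<noteq> 0 \<and> of_real a * z^2 + of_real p * z + of_real q = 0)
         \<longleftrightarrow> discrim a p q < 0"
proof
  assume "\<exists>z::complex. Im z \<noteq> 0 \<and> of_real a * z^2 + of_real p * z + of_real q = 0"
  then obtain z :: complex where z: "Im z \<noteq> 0" "of_real a * z^2 + of_real p * z + of_real q = 0"
    by blast
  then have "p = -2 * a * Re z" "q = a * ((Re z)^2 + (Im z)^2)"
    using quadratic_nonreal_root_iff[OF assms z(1)] by (simp_all add: cmod_power2)
  then have "discrim a p q = -4 * a^2 * (Im z)^2"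
    by (simp add: discrim_def algebra_simps power2_eq_square)
  with assms z(1) show "discrim a p q < 0"
    by simp
next
  assume D: "discrim a p q < 0"
  define x where "x = - p / (2 * a)"
  define y where "y = sqrt (- discrim a p q) / (2 * a)"
  have y: "y \<noteq> 0"
    using D assms by (simp add: y_def)
  have "y^2 = - discrim a p q / (4 * a^2)"
    using D by (simp add: y_def power_divide power_mult_distrib)
  then have "p = -2 * a * x" "q = a * (x^2 + y^2)"
    using assms by (simp_all add: x_def discrim_def field_simps power2_eq_square)
  then have "of_real a * (Complex x y)^2 + of_real p * Complex x y + of_real q = 0"
    using y by (intro quadratic_nonreal_root_iff[THEN iffD2]) (simp_all add: assms cmod_power2)
  with y show "\<exists>z::complex. Im z \<noteq> 0 \<and> of_real a * z^2 + of_real p * z + of_real q = 0"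
    by (intro exI[of _ "Complex x y"]) simp
qed

lemma quadratic_real_roots:
  fixes a p q :: real
  assumes "a \<noteq> 0" and "0 \<le> discrim a p q"
  shows "\<exists>x y. {x. a * x^2 + p * x + q = 0} = {x, y} \<and> x * y = q / a \<and> x + y = - p / a"
proof (intro exI conjI)
  define s where "s = sqrt (discrim a p q)"
  have s: "s^2 = p^2 - 4 * a * q"
    using assms(2) by (simp add: s_def discrim_def)
  show "{x. a * x^2 + p * x + q = 0} = {(-p + s) / (2 * a), (-p - s) / (2 * a)}"
    using discriminant_nonneg[OF assms] by (auto simp: s_def)
  have "(-p + s) * (-p - s) = 4 * a * q"
    using s by (simp add: algebra_simps power2_eq_square)
  then show "(-p + s) / (2 * a) * ((-p - s) / (2 * a)) = q / a"
    using assms(1) by (simp add: field_simps)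
  show "(-p + s) / (2 * a) + (-p - s) / (2 * a) = - p / a"
    using assms(1) by (simp add: field_simps)
qed

definition cubic_discrim :: "real \<Rightarrow> real \<Rightarrow> real \<Rightarrow> real \<Rightarrow> real" where
  "cubic_discrim a b c d = 18*a*b*c*d - 4*b^3*d + b^2*c^2 - 4*a*c^3 - 27*a^2*d^2"

lemma cubic_factor:
  fixes z :: "'a::{comm_ring_1,real_algebra_1}"
  assumes "b = p - a*r" and "c = q - p*r" and "e = -(q*r)"
  shows "of_real a * z^3 + of_real b * z^2 + of_real c * z + of_real e =
         (z - of_real r) * (of_real a * z^2 + of_real p * z + of_real q)"
  unfolding assms by (simp add: algebra_simps power2_eq_square power3_eq_cube)

lemma cubic_discrim_factor:
  assumes "b = p - a*r" and "c = q - p*r" and "e = -(q*r)"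
  shows "cubic_discrim a b c e = discrim a p q * (a*r^2 + p*r + q)^2"
  unfolding assms cubic_discrim_def discrim_def by algebra

lemma cubic_discrim_neg_iff:
  assumes "a \<noteq> 0" and "b = p - a*r" and "c = q - p*r" and "e = -(q*r)"
  shows "cubic_discrim a b c e < 0 \<longleftrightarrow> discrim a p q < 0"
proof -
  have "discrim a p q < 0 \<Longrightarrow> a*r^2 + p*r + q \<noteq> 0"
    using discriminant_negative[OF assms(1)] by blast
  then show ?thesis
    unfolding cubic_discrim_factor[OF assms(2-4)] mult_less_0_iff by auto
qed

section \<open>The bounds \<open>q\<^sub>1\<close> and \<open>q\<^sub>2\<close>\<close>

text \<open>With \<open>\<tau> = t/l\<close>: \<open>q\<^sub>2\<^sup>2 = q_centre \<tau> + q_radius \<tau>\<close>, and \<open>q\<^sub>1\<^sup>2 = q_centre \<tau> - q_radius \<tau>\<close> for \<open>\<tau> < 1/2\<close>.\<close>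

definition q_centre :: "real \<Rightarrow> real" where
  "q_centre \<tau> = - (\<tau>^2 / 2) + 5 * \<tau> + 1"

definition q_radius :: "real \<Rightarrow> real" where
  "q_radius \<tau> = \<tau>^2 / 2 * (1 + 4 / \<tau>) powr (3/2)"

lemma q_radius_nonneg: "0 \<le> q_radius \<tau>"
  by (simp add: q_radius_def)

lemma q_radius_sq:
  assumes "0 < \<tau>"
  shows "(q_radius \<tau>)^2 = \<tau> * (\<tau> + 4)^3 / 4"
proof -
  have pos: "0 < 1 + 4 / \<tau>"
    using assms by (simp add: add_pos_pos)
  have "((1 + 4 / \<tau>) powr (3/2))^2 = (1 + 4 / \<tau>) powr (real 2 * (3/2))"
    using pos by (subst powr_power) simp_all
  also have "\<dots> = (1 + 4 / \<tau>) ^ 3"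
    using pos powr_realpow[of "1 + 4 / \<tau>" 3] by simp
  finally have "(q_radius \<tau>)^2 = (\<tau>^2 / 2)^2 * (1 + 4 / \<tau>)^3"
    unfolding q_radius_def by (simp only: power_mult_distrib)
  also have "\<dots> = \<tau> * (\<tau> + 4)^3 / 4"
    using assms by (simp add: field_simps power2_eq_square power3_eq_cube)
  finally show ?thesis .
qed

lemma q_radius_sq_minus_q_centre_sq:
  assumes "0 < \<tau>"
  shows "(q_radius \<tau>)^2 - (q_centre \<tau>)^2 = (2*\<tau> - 1)^3"
  unfolding q_radius_sq[OF assms] q_centre_def
  by (simp add: field_simps power2_eq_square power3_eq_cube)

lemma q_centre_le_q_radius:
  assumes "1/2 \<le> \<tau>"
  shows "q_centre \<tau> \<le> q_radius \<tau>"
proof -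
  have "0 \<le> (2*\<tau> - 1)^3"
    using assms by simp
  moreover have "(q_radius \<tau>)^2 - (q_centre \<tau>)^2 = (2*\<tau> - 1)^3"
    using assms by (intro q_radius_sq_minus_q_centre_sq) simp
  ultimately have "(q_centre \<tau>)^2 \<le> (q_radius \<tau>)^2"
    by linarith
  then show ?thesis
    using q_radius_nonneg power2_le_imp_le by (smt (verit))
qed

lemma q_centre_gt:
  assumes "0 < \<tau>" and "\<tau> < 8"
  shows "(1 - \<tau>/2)^2 < q_centre \<tau>"
proof -
  have "q_centre \<tau> - (1 - \<tau>/2)^2 = \<tau> * (6 - 3*\<tau>/4)"
    by (simp add: q_centre_def field_simps power2_eq_square)
  moreover have "0 < \<tau> * (6 - 3*\<tau>/4)"
    using assms by simp
  ultimately show ?thesis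
    by simp
qed

lemma q_centre_minus_q_radius_le:
  assumes "0 < \<tau>" and "\<tau> < 1/2"
  shows "q_centre \<tau> - q_radius \<tau> \<le> (1 - \<tau>)^2"
proof -
  have "0 < -2*\<tau>^3 + 24*\<tau>^2 - 37*\<tau> + 16"
  proof -
    have "2*\<tau>^3 \<le> \<tau>^2"
      using assms mult_left_mono[of "2*\<tau>" 1 "\<tau>^2"] by (simp add: power2_eq_square power3_eq_cube)
    moreover have "23*\<tau>^2 - 37*\<tau> + 16 = 23*(\<tau> - 37/46)^2 + 103/92"
      by (simp add: power2_eq_square field_simps)
    ultimately show ?thesis
      using zero_le_power2[of "\<tau> - 37/46"] by linarith
  qed
  then have "0 < \<tau> * (-2*\<tau>^3 + 24*\<tau>^2 - 37*\<tau> + 16)"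
    using assms by simp
  moreover have "(q_radius \<tau>)^2 - (7*\<tau> - 3*\<tau>^2/2)^2 = \<tau> * (-2*\<tau>^3 + 24*\<tau>^2 - 37*\<tau> + 16)"
    unfolding q_radius_sq[OF assms(1)] by (simp add: field_simps power2_eq_square power3_eq_cube)
  ultimately have "(7*\<tau> - 3*\<tau>^2/2)^2 < (q_radius \<tau>)^2"
    by linarith
  then have "7*\<tau> - 3*\<tau>^2/2 \<le> q_radius \<tau>"
    using q_radius_nonneg by (smt (verit) power2_le_imp_le)
  then show ?thesis
    by (simp add: q_centre_def power2_eq_square algebra_simps)
qed

lemma Rtdl_cubic_discrim:
  assumes "0 < \<tau>"
  shows "cubic_discrim \<tau> (2 - 2*\<delta> - \<tau>) (2 + 2*\<delta> - \<tau>) \<tau>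
         = 16 * ((\<delta>^2 - q_centre \<tau>)^2 - (q_radius \<tau>)^2)"
  unfolding q_radius_sq[OF assms] cubic_discrim_def q_centre_def
  by (simp add: algebra_simps power2_eq_square power3_eq_cube)

lemma q2_eq:
  "q2 t l = sqrt (q_centre (t/l) + q_radius (t/l))"
proof -
  have "4 * l / t = 4 / (t/l)"
    by simp
  then show ?thesis
    unfolding q2_def q_centre_def q_radius_def by (simp add: power_divide)
qed

lemma q1_eq:
  assumes "0 < l" and "0 < t"
  shows "q1 t l = (if t/l < 1/2 then sqrt (q_centre (t/l) - q_radius (t/l)) else 0)"
proof -
  have "4 * l / t = 4 / (t/l)"
    by simp
  then show ?thesis
    using assms unfolding q1_def q_centre_def q_radius_def by (simp add: power_divide)
qed

lemma less_sqrt_iff_power2_less: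
  fixes x y :: real
  assumes "0 < x"
  shows "x < sqrt y \<longleftrightarrow> x^2 < y"
  using real_sqrt_less_iff[of "x^2" y] assms by simp

lemma sqrt_less_iff_less_power2:
  fixes x y :: real
  assumes "0 < x"
  shows "sqrt y < x \<longleftrightarrow> y < x^2"
  using real_sqrt_less_iff[of y "x^2"] assms by simp

lemma less_l_q2_iff:
  assumes "0 < l" and "0 < d"
  shows "d < l * q2 t l \<longleftrightarrow> (d/l)^2 < q_centre (t/l) + q_radius (t/l)"
proof -
  have "d < l * q2 t l \<longleftrightarrow> d/l < q2 t l"
    using assms by (simp add: field_simps)
  then show ?thesis
    using assms by (simp add: q2_eq less_sqrt_iff_power2_less)
qed

lemma l_q1_less_iff:
  assumes "0 < l" and "0 < t" and "0 < d"
  shows "l * q1 t l < d \<longleftrightarrow> q_centre (t/l) - q_radius (t/l) < (d/l)^2"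
proof -
  have "l * q1 t l < d \<longleftrightarrow> q1 t l < d/l"
    using assms by (simp add: field_simps)
  moreover have "q_centre (t/l) - q_radius (t/l) < (d/l)^2" if "1/2 \<le> t/l"
    using q_centre_le_q_radius[OF that] assms by (smt (verit) zero_less_power divide_pos_pos)
  ultimately show ?thesis
    using assms by (auto simp: q1_eq sqrt_less_iff_less_power2)
qed

section \<open>The cubic \<open>R\<close>\<close>

lemma Rtdl_scale:
  "Rtdl (l*t) (l*d) l z = of_real l * Rtdl t d 1 z"
  unfolding Rtdl_def
  by (simp add: algebra_simps flip: scaleR_conv_of_real)

lemma Rtdl_eq_0_iff:
  fixes z :: "'a::real_algebra_1"
  assumes "l \<noteq> 0"
  shows "Rtdl t d l z = 0 \<longleftrightarrow> Rtdl (t/l) (d/l) 1 z = 0"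
  using Rtdl_scale[of l "t/l" "d/l" z] assms by (simp flip: scaleR_conv_of_real)

lemma Rtdl_real_root_between_minus_one_and_zero:
  assumes "0 < t" and "0 < d"
  shows "\<exists>r::real. -1 < r \<and> r < 0 \<and> Rtdl t d l r = 0"
proof -
  have ends: "Rtdl t d l (-1::real) = -4*d" "Rtdl t d l (0::real) = t"
    by (simp_all add: Rtdl_def)
  then have "\<exists>r\<ge>-1. r \<le> 0 \<and> Rtdl t d l r = (0::real)"
    using assms by (intro IVT) (auto simp: Rtdl_def)
  then obtain r :: real where "-1 \<le> r" "r \<le> 0" "Rtdl t d l r = 0"
    by blast
  moreover have "r \<noteq> -1" "r \<noteq> 0"
    using calculation(3) ends assms by auto
  ultimately show ?thesis
    by force
qed

locale Rtdl_normalized_root =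
  fixes \<tau> \<delta> r :: real
  assumes tau_pos: "0 < \<tau>" and delta_pos: "0 < \<delta>"
    and root_between: "-1 < r" "r < 0"
    and root: "Rtdl \<tau> \<delta> 1 r = 0"
begin

definition p :: real where "p = 2 - 2*\<delta> - \<tau> + \<tau>*r"

definition q :: real where "q = - \<tau> / r"

lemma coeffs_eq:
  "2 - 2*\<delta> - \<tau> = p - \<tau>*r" "2 + 2*\<delta> - \<tau> = q - p*r" "\<tau> = -(q*r)"
proof -
  show "2 - 2*\<delta> - \<tau> = p - \<tau>*r"
    by (simp add: p_def)
  show "\<tau> = -(q*r)"
    using root_between by (simp add: q_def)
  from root have "(2 + 2*\<delta> - \<tau>) * r = - \<tau> - (2 - 2*\<delta> - \<tau>) * r^2 - \<tau> * r^3"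
    by (simp add: Rtdl_def algebra_simps)
  then show "2 + 2*\<delta> - \<tau> = q - p*r"
    using root_between by (simp add: p_def q_def field_simps power2_eq_square power3_eq_cube)
qed

lemma Rtdl_factor:
  fixes z :: "'a::{comm_ring_1,real_algebra_1}"
  shows "Rtdl \<tau> \<delta> 1 z = (z - of_real r) * (of_real \<tau> * z^2 + of_real p * z + of_real q)"
proof -
  have "Rtdl \<tau> \<delta> 1 z =
        of_real \<tau> * z^3 + of_real (2 - 2*\<delta> - \<tau>) * z^2 + of_real (2 + 2*\<delta> - \<tau>) * z + of_real \<tau>"
    by (simp add: Rtdl_def algebra_simps)
  also have "\<dots> = (z - of_real r) * (of_real \<tau> * z^2 + of_real p * z + of_real q)"
    by (rule cubic_factor[OF coeffs_eq])
  finally show ?thesis .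
qed

lemma tau_less_q: "\<tau> < q"
  using tau_pos root_between mult_strict_left_mono[of "-1" r \<tau>] by (simp add: q_def field_simps)

lemma Rtdl_nonreal_root_iff:
  fixes z :: complex
  assumes "Im z \<noteq> 0"
  shows "Rtdl \<tau> \<delta> 1 z = 0 \<longleftrightarrow> of_real \<tau> * z^2 + of_real p * z + of_real q = 0"
proof -
  have "z - of_real r \<noteq> 0"
    using assms by auto
  then show ?thesis
    by (simp add: Rtdl_factor)
qed

lemma ex_nonreal_root_iff_discrim_neg:
  "(\<exists>z::complex. Im z \<noteq> 0 \<and> Rtdl \<tau> \<delta> 1 z = 0) \<longleftrightarrow> discrim \<tau> p q < 0"
  using ex_nonreal_quadratic_root_iff[of \<tau> p q] tau_pos Rtdl_nonreal_root_iff by auto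

lemma discrim_neg_iff:
  "discrim \<tau> p q < 0 \<longleftrightarrow>
   q_centre \<tau> - q_radius \<tau> < \<delta>^2 \<and> \<delta>^2 < q_centre \<tau> + q_radius \<tau>"
proof -
  have "discrim \<tau> p q < 0 \<longleftrightarrow> cubic_discrim \<tau> (2 - 2*\<delta> - \<tau>) (2 + 2*\<delta> - \<tau>) \<tau> < 0"
    using cubic_discrim_neg_iff[OF _ coeffs_eq] tau_pos by simp
  also have "\<dots> \<longleftrightarrow> (\<delta>^2 - q_centre \<tau>)^2 < (q_radius \<tau>)^2"
    unfolding Rtdl_cubic_discrim[OF tau_pos] by simp
  also have "\<dots> \<longleftrightarrow> q_centre \<tau> - q_radius \<tau> < \<delta>^2 \<and> \<delta>^2 < q_centre \<tau> + q_radius \<tau>"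
    by (rule power2_diff_less_power2_iff[OF q_radius_nonneg])
  finally show ?thesis .
qed

lemma nonreal_root_norm_gt_one:
  fixes z :: complex
  assumes "Im z \<noteq> 0" and "Rtdl \<tau> \<delta> 1 z = 0"
  shows "1 < cmod z"
proof -
  have "\<tau> * (cmod z)^2 = q"
    using assms tau_pos quadratic_nonreal_root_iff[of \<tau> z p q] Rtdl_nonreal_root_iff by simp
  then have "\<tau> * 1 < \<tau> * (cmod z)^2"
    using tau_less_q by simp
  then have "1^2 < (cmod z)^2"
    using tau_pos by simp
  then show ?thesis
    by (rule power_less_imp_less_base) simp
qed

lemma real_roots:
  assumes "0 \<le> discrim \<tau> p q"
  obtains x y where "{z::real. Rtdl \<tau> \<delta> 1 z = 0} = {r, x, y}" and "1 < x * y" and "x + y = - p / \<tau>"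
proof -
  obtain x y where xy: "{z. \<tau> * z^2 + p * z + q = 0} = {x, y}" "x * y = q / \<tau>" "x + y = - p / \<tau>"
    using quadratic_real_roots[OF _ assms] tau_pos by auto
  have "{z::real. Rtdl \<tau> \<delta> 1 z = 0} = insert r {z. \<tau> * z^2 + p * z + q = 0}"
    by (auto simp: Rtdl_factor)
  moreover have "1 < x * y"
    using xy(2) tau_less_q tau_pos by simp
  ultimately show ?thesis
    using that xy by simp
qed

lemma Max_real_root_gt_one:
  assumes "q_centre \<tau> + q_radius \<tau> \<le> \<delta>^2"
  shows "1 < Max {z::real. Rtdl \<tau> \<delta> 1 z = 0}"
proof -
  have "0 \<le> discrim \<tau> p q"
    using discrim_neg_iff assms by linarith
  then obtain x y where roots: "{z::real. Rtdl \<tau> \<delta> 1 z = 0} = {r, x, y}"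
    and xy: "1 < x * y" "x + y = - p / \<tau>"
    by (rule real_roots)
  have "1 - \<tau>/2 < \<delta>"
  proof (cases "\<tau> < 2")
    case True
    then have "(1 - \<tau>/2)^2 < \<delta>^2"
      using q_centre_gt[OF tau_pos] q_radius_nonneg[of \<tau>] assms by force
    then show ?thesis
      by (rule power_less_imp_less_base) (use delta_pos in simp)
  qed (use delta_pos in simp)
  then have "p < 0"
    using tau_pos root_between mult_pos_neg[of \<tau> r] by (simp add: p_def)
  then have "0 < x + y"
    using xy(2) tau_pos by (simp add: divide_neg_pos)
  then have "1 < x \<or> 1 < y"
    using one_lt_factor_if_prod_gt_one xy(1) by blast
  then show ?thesis
    unfolding roots by auto
qed

lemma Min_real_root_lt_minus_one:
  assumes "\<delta>^2 \<le> q_centre \<tau> - q_radius \<tau>"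
  shows "Min {z::real. Rtdl \<tau> \<delta> 1 z = 0} < -1"
proof -
  have "0 \<le> discrim \<tau> p q"
    using discrim_neg_iff assms by linarith
  then obtain x y where roots: "{z::real. Rtdl \<tau> \<delta> 1 z = 0} = {r, x, y}"
    and xy: "1 < x * y" "x + y = - p / \<tau>"
    by (rule real_roots)
  have "\<tau> < 1/2"
    using q_centre_le_q_radius[of \<tau>] assms delta_pos by (smt (verit) zero_less_power)
  then have "\<delta>^2 \<le> (1 - \<tau>)^2"
    using q_centre_minus_q_radius_le[OF tau_pos] assms by linarith
  then have "\<delta> \<le> 1 - \<tau>"
    by (rule power2_le_imp_le) (use \<open>\<tau> < 1/2\<close> in simp)
  then have "0 < p"
    using tau_pos root_between mult_strict_left_mono[of "-1" r \<tau>] by (simp add: p_def)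
  then have "0 < (-x) + (-y)"
    using xy(2) divide_pos_pos[OF _ tau_pos] by fastforce
  then have "1 < -x \<or> 1 < -y"
    using one_lt_factor_if_prod_gt_one[of "-x" "-y"] xy(1) by simp
  then show ?thesis
    unfolding roots by auto
qed

end

theorem proposition5p1:
  fixes t d l :: real
  assumes "l > 0" and "d > 0" and "t > 0"
  shows "((\<exists>z::complex. Im z \<noteq> 0 \<and> Rtdl t d l z = 0) \<longleftrightarrow>
            (l * q1 t l < d \<and> d < l * q2 t l))
       \<and> (\<forall>z0::complex. Im z0 > 0 \<and> Rtdl t d l z0 = 0 \<longrightarrow> cmod z0 > 1)
       \<and> (d \<ge> l * q2 t l \<longrightarrow> Max {z::real. Rtdl t d l z = 0} > 1)
       \<and> (d \<le> l * q1 t l \<longrightarrow> Min {z::real. Rtdl t d l z = 0} < -1)"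
proof -
  obtain r :: real where "-1 < r" "r < 0" "Rtdl (t/l) (d/l) 1 r = 0"
    using Rtdl_real_root_between_minus_one_and_zero[of "t/l" "d/l" 1] assms by auto
  then interpret Rtdl_normalized_root "t/l" "d/l" r
    using assms by unfold_locales simp_all
  have zero_iff: "Rtdl t d l z = 0 \<longleftrightarrow> Rtdl (t/l) (d/l) 1 z = 0" for z :: "'a::real_algebra_1"
    using assms(1) by (intro Rtdl_eq_0_iff) simp
  note bounds = l_q1_less_iff[OF assms(1,3,2)] less_l_q2_iff[OF assms(1,2)]
  have "(\<exists>z::complex. Im z \<noteq> 0 \<and> Rtdl t d l z = 0) \<longleftrightarrow> l * q1 t l < d \<and> d < l * q2 t l"
    unfolding zero_iff bounds ex_nonreal_root_iff_discrim_neg discrim_neg_iff ..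
  moreover have "\<forall>z0::complex. Im z0 > 0 \<and> Rtdl t d l z0 = 0 \<longrightarrow> cmod z0 > 1"
    using nonreal_root_norm_gt_one by (simp add: zero_iff)
  moreover have "d \<ge> l * q2 t l \<longrightarrow> Max {z::real. Rtdl t d l z = 0} > 1"
    using Max_real_root_gt_one by (simp add: zero_iff bounds flip: not_less)
  moreover have "d \<le> l * q1 t l \<longrightarrow> Min {z::real. Rtdl t d l z = 0} < -1"
    using Min_real_root_lt_minus_one by (simp add: zero_iff bounds flip: not_less)
  ultimately show ?thesis
    by blast
qed

end
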